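(* If $\Lambda$ is a (non-degenerate) real interval, then no PAF $\psi:\mathcal P^N\to\mathcal P$ that is Level-SP and unanimous satisfies diversity.
   Context: Let $N=\{1,\dots,n\}$, $\mathcal P$ the Borel probability measures on $\Lambda$, $\mathcal C$ the CDFs on $\Lambda$, $\pi(p)(a)=p(\{x\in\Lambda:x\le a\})$. A PAF is a map $\psi:\mathcal P^N\to\mathcal P$ with associated CAF $\Psi$ given by $\Psi(\pi(p_1),\dots,\pi(p_n))=\pi(\psi(p_1,\dots,p_n))$; $P_i=\pi(p_i)$. $\mathbf z_{-i}(z_i')$ is $\mathbf z$ with $i$-th coordinate replaced by $z_i'$. $\psi$ is Level-SP if for every $i$, $\mathbf P$, $P_i'$, $a$: $P_i(a)<\Psi(\mathbf P)(a)\Rightarrow\Psi(\mathbf P)(a)\le\Psi(\mathbf P_{-i}(P_i'))(a)$ and $P_i(a)>\Psi(\mathbf P)(a)\Rightarrow\Psi(\mathbf P)(a)\ge\Psi(\mathbf P_{-i}(P_i'))(a)$. $\psi$ is unanimous if $\psi(p,\dots,p)=p$. $\psi$ satisfies diversity if for every profile $\mathbf p$, the support of $\psi(\mathbf p)$ contains the union of the supports of $p_1,\dots,p_n$. *)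

theory Defs
  imports "HOL-Probability.Probability" "HOL-Library.FuncSet"
begin

definition prob_measures :: "real set \<Rightarrow> real measure set" where
  "prob_measures \<Lambda> = {p. prob_space p \<and> sets p = sets (restrict_space borel \<Lambda>)}"

definition cdf_of :: "real set \<Rightarrow> real measure \<Rightarrow> real \<Rightarrow> real" where
  "cdf_of \<Lambda> p a = measure p {x \<in> \<Lambda>. x \<le> a}"

definition supp :: "real set \<Rightarrow> real measure \<Rightarrow> real set" where
  "supp \<Lambda> p = {x \<in> \<Lambda>. \<forall>e>0. 0 < measure p (ball x e \<inter> \<Lambda>)}"

definition profiles :: "nat \<Rightarrow> real set \<Rightarrow> (nat \<Rightarrow> real measure) set" where
  "profiles n \<Lambda> = PiE {1..n} (\<lambda>_. prob_measures \<Lambda>)"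

definition is_PAF :: "nat \<Rightarrow> real set \<Rightarrow> ((nat \<Rightarrow> real measure) \<Rightarrow> real measure) \<Rightarrow> bool" where
  "is_PAF n \<Lambda> \<psi> \<longleftrightarrow> (\<forall>p\<in>profiles n \<Lambda>. \<psi> p \<in> prob_measures \<Lambda>)"

definition level_SP :: "nat \<Rightarrow> real set \<Rightarrow> ((nat \<Rightarrow> real measure) \<Rightarrow> real measure) \<Rightarrow> bool" where
  "level_SP n \<Lambda> \<psi> \<longleftrightarrow>
    (\<forall>p\<in>profiles n \<Lambda>. \<forall>i\<in>{1..n}. \<forall>q\<in>prob_measures \<Lambda>. \<forall>a\<in>\<Lambda>.
      (cdf_of \<Lambda> (p i) a < cdf_of \<Lambda> (\<psi> p) a \<longrightarrow>
          cdf_of \<Lambda> (\<psi> p) a \<le> cdf_of \<Lambda> (\<psi> (p(i := q))) a) \<and>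
      (cdf_of \<Lambda> (p i) a > cdf_of \<Lambda> (\<psi> p) a \<longrightarrow>
          cdf_of \<Lambda> (\<psi> p) a \<ge> cdf_of \<Lambda> (\<psi> (p(i := q))) a))"

definition unanimous :: "nat \<Rightarrow> real set \<Rightarrow> ((nat \<Rightarrow> real measure) \<Rightarrow> real measure) \<Rightarrow> bool" where
  "unanimous n \<Lambda> \<psi> \<longleftrightarrow> (\<forall>q\<in>prob_measures \<Lambda>. \<psi> (\<lambda>i\<in>{1..n}. q) = q)"

definition diversity :: "nat \<Rightarrow> real set \<Rightarrow> ((nat \<Rightarrow> real measure) \<Rightarrow> real measure) \<Rightarrow> bool" where
  "diversity n \<Lambda> \<psi> \<longleftrightarrow>
    (\<forall>p\<in>profiles n \<Lambda>. (\<Union>i\<in>{1..n}. supp \<Lambda> (p i)) \<subseteq> supp \<Lambda> (\<psi> p))"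

end

theory Submission imports Defs begin

text \<open>Take a < y < c < z < b in \<Lambda>. Diversity puts a into the support of the aggregate of
  (\<delta>_a, \<delta>_b, ..., \<delta>_b), so its CDF at y is some s > 0. Put P = s\<delta>_a + (1-s)\<delta>_b and
  Q = s\<delta>_c + (1-s)\<delta>_b. Level-SP makes the aggregate CDF at a level x depend only on the
  individual CDFs at x, and squeezing voter 1 between \<delta>_b and \<delta>_a shows that the aggregate of
  (P, Q, ..., Q) has CDF s at y; by unanimity it also has CDF s at z, where Q and P agree. So it
  puts no mass on (y, z], although diversity puts c into its support.\<close>

lemma Int_in_sets_restrict_space: "A \<in> sets M \<Longrightarrow> A \<inter> \<Omega> \<in> sets (restrict_space M \<Omega>)"
  unfolding sets_restrict_space by (rule image_eqI[of _ _ A]) auto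

lemma cdf_set_in_sets:
  fixes t :: "'a::linorder_topology"
  shows "{x \<in> \<Lambda>. x \<le> t} \<in> sets (restrict_space borel \<Lambda>)"
proof -
  have "{x \<in> \<Lambda>. x \<le> t} = {..t} \<inter> \<Lambda>" by auto
  then show ?thesis by (simp add: Int_in_sets_restrict_space)
qed

lemma cdf_of_nonneg: "0 \<le> cdf_of \<Lambda> p x"
  by (simp add: cdf_of_def)

lemma cdf_of_le_1: "p \<in> prob_measures \<Lambda> \<Longrightarrow> cdf_of \<Lambda> p x \<le> 1"
  by (simp add: cdf_of_def prob_measures_def prob_space.prob_le_1)

lemma cdf_of_less_across_supp:
  assumes p: "p \<in> prob_measures \<Lambda>" and x: "x \<in> supp \<Lambda> p" and "y < x" "x < z"
  shows "cdf_of \<Lambda> p y < cdf_of \<Lambda> p z"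
proof -
  interpret prob_space p using p by (simp add: prob_measures_def)
  have sets_p: "sets p = sets (restrict_space borel \<Lambda>)" using p by (simp add: prob_measures_def)
  define e where "e = min (x - y) (z - x)"
  have "0 < measure p (ball x e \<inter> \<Lambda>)"
    using x \<open>y < x\<close> \<open>x < z\<close> by (simp add: supp_def e_def)
  also have "\<dots> \<le> measure p ({t \<in> \<Lambda>. t \<le> z} - {t \<in> \<Lambda>. t \<le> y})"
    by (rule finite_measure_mono) (auto simp: dist_real_def e_def sets_p cdf_set_in_sets)
  also have "\<dots> = cdf_of \<Lambda> p z - cdf_of \<Lambda> p y"
    unfolding cdf_of_def using \<open>y < x\<close> \<open>x < z\<close>
    by (intro finite_measure_Diff) (auto simp: sets_p cdf_set_in_sets)
  finally show ?thesis by simp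
qed

text \<open>s\<delta>_u + (1-s)\<delta>_v on \<Lambda>; the retraction onto \<Lambda> only serves measurability and is the
  identity on u and v.\<close>
definition two_point_measure :: "real set \<Rightarrow> real \<Rightarrow> real \<Rightarrow> real \<Rightarrow> real measure" where
  "two_point_measure \<Lambda> s u v =
     distr (measure_pmf (map_pmf (\<lambda>b. if b then u else v) (bernoulli_pmf s)))
       (restrict_space borel \<Lambda>) (\<lambda>x. if x \<in> \<Lambda> then x else u)"

lemma two_point_measure_in_prob_measures:
  assumes "u \<in> \<Lambda>" shows "two_point_measure \<Lambda> s u v \<in> prob_measures \<Lambda>"
  unfolding prob_measures_def two_point_measure_def
  using assms by (auto intro!: prob_space.prob_space_distr prob_space_measure_pmf
      simp: space_restrict_space)

lemma measure_two_point_measure: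
  assumes A: "A \<in> sets (restrict_space borel \<Lambda>)" and "u \<in> \<Lambda>" "v \<in> \<Lambda>" "u \<noteq> v" "0 \<le> s" "s \<le> 1"
  shows "measure (two_point_measure \<Lambda> s u v) A
           = (if u \<in> A then s else 0) + (if v \<in> A then 1 - s else 0)"
proof -
  let ?f = "\<lambda>b. if b then u else v" and ?r = "\<lambda>x. if x \<in> \<Lambda> then x else u"
  have r: "?r \<in> measurable (measure_pmf (map_pmf ?f (bernoulli_pmf s))) (restrict_space borel \<Lambda>)"
    using assms by (auto simp: space_restrict_space)
  have preimage: "?f -` (?r -` A) = (if u \<in> A then {True} else {}) \<union> (if v \<in> A then {False} else {})"
    using assms by (auto split: if_splits)
  have "measure (two_point_measure \<Lambda> s u v) A = measure (measure_pmf (bernoulli_pmf s)) (?f -` (?r -` A))"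
    unfolding two_point_measure_def using measure_distr[OF r A] by simp
  also have "\<dots> = sum (pmf (bernoulli_pmf s)) (?f -` (?r -` A))"
    by (rule measure_measure_pmf_finite) simp
  also have "\<dots> = (if u \<in> A then s else 0) + (if v \<in> A then 1 - s else 0)"
    unfolding preimage using assms by auto
  finally show ?thesis .
qed

lemma cdf_of_two_point_measure:
  assumes "u \<in> \<Lambda>" "v \<in> \<Lambda>" "u \<noteq> v" "0 \<le> s" "s \<le> 1"
  shows "cdf_of \<Lambda> (two_point_measure \<Lambda> s u v) x
           = (if u \<le> x then s else 0) + (if v \<le> x then 1 - s else 0)"
  using measure_two_point_measure[OF cdf_set_in_sets assms] assms by (simp add: cdf_of_def)

lemma in_supp_two_point_measure:
  assumes "u \<in> \<Lambda>" "v \<in> \<Lambda>" "u \<noteq> v" "0 < s" "s \<le> 1"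
  shows "u \<in> supp \<Lambda> (two_point_measure \<Lambda> s u v)"
proof -
  have mass: "s \<le> measure (two_point_measure \<Lambda> s u v) (ball u e \<inter> \<Lambda>)" if "0 < e" for e
  proof -
    have "u \<in> ball u e \<inter> \<Lambda>" using assms(1) that by simp
    with measure_two_point_measure[OF Int_in_sets_restrict_space[OF borel_open[OF open_ball]]
        assms(1-3) less_imp_le[OF assms(4)] assms(5)]
    show ?thesis using assms(5) by simp
  qed
  have "\<forall>e>0. 0 < measure (two_point_measure \<Lambda> s u v) (ball u e \<inter> \<Lambda>)"
    using less_le_trans[OF assms(4) mass] by blast
  then show ?thesis using assms(1) unfolding supp_def by blast
qed

lemma profiles_fun_upd:
  "p \<in> profiles n \<Lambda> \<Longrightarrow> i \<in> {1..n} \<Longrightarrow> q \<in> prob_measures \<Lambda> \<Longrightarrow> p(i := q) \<in> profiles n \<Lambda>"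
  unfolding profiles_def by (metis PiE_fun_upd insert_absorb)

lemma constant_profile_in_profiles: "q \<in> prob_measures \<Lambda> \<Longrightarrow> (\<lambda>i\<in>{1..n}. q) \<in> profiles n \<Lambda>"
  by (simp add: profiles_def)

definition split_profile :: "nat \<Rightarrow> 'a \<Rightarrow> 'a \<Rightarrow> nat \<Rightarrow> 'a" where
  "split_profile n P Q = (\<lambda>i\<in>{1..n}. if i = 1 then P else Q)"

lemma split_profile_in_profiles:
  "P \<in> prob_measures \<Lambda> \<Longrightarrow> Q \<in> prob_measures \<Lambda> \<Longrightarrow> split_profile n P Q \<in> profiles n \<Lambda>"
  by (simp add: split_profile_def profiles_def)

lemma split_profile_fun_upd: "1 \<le> n \<Longrightarrow> (split_profile n P Q)(1 := R) = split_profile n R Q"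
  by (auto simp: split_profile_def fun_eq_iff)

lemma split_profile_same: "split_profile n P P = (\<lambda>i\<in>{1..n}. P)"
  by (simp add: split_profile_def)

lemma level_SPD:
  assumes "level_SP n \<Lambda> \<psi>" "p \<in> profiles n \<Lambda>" "i \<in> {1..n}" "q \<in> prob_measures \<Lambda>" "x \<in> \<Lambda>"
  shows "cdf_of \<Lambda> (p i) x < cdf_of \<Lambda> (\<psi> p) x \<Longrightarrow> cdf_of \<Lambda> (\<psi> p) x \<le> cdf_of \<Lambda> (\<psi> (p(i := q))) x"
    and "cdf_of \<Lambda> (p i) x > cdf_of \<Lambda> (\<psi> p) x \<Longrightarrow> cdf_of \<Lambda> (\<psi> p) x \<ge> cdf_of \<Lambda> (\<psi> (p(i := q))) x"
  using assms unfolding level_SP_def by blast+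

lemma level_SP_cdf_of_fun_upd:
  assumes SP: "level_SP n \<Lambda> \<psi>" and p: "p \<in> profiles n \<Lambda>" and i: "i \<in> {1..n}"
    and q: "q \<in> prob_measures \<Lambda>" and x: "x \<in> \<Lambda>" and eq: "cdf_of \<Lambda> (p i) x = cdf_of \<Lambda> q x"
  shows "cdf_of \<Lambda> (\<psi> (p(i := q))) x = cdf_of \<Lambda> (\<psi> p) x"
proof -
  let ?p' = "p(i := q)"
  have p': "?p' \<in> profiles n \<Lambda>" using profiles_fun_upd[OF p i q] .
  have pi: "p i \<in> prob_measures \<Lambda>" using p i by (auto simp: profiles_def)
  have restore: "?p'(i := p i) = p" by simp
  note change = level_SPD[OF SP p i q x] and undo = level_SPD[OF SP p' i pi x, unfolded restore fun_upd_same]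
  show ?thesis
    using change undo eq by (smt (verit))
qed

lemma level_SP_cdf_of_eq:
  assumes SP: "level_SP n \<Lambda> \<psi>" and p: "p \<in> profiles n \<Lambda>" and p': "p' \<in> profiles n \<Lambda>"
    and x: "x \<in> \<Lambda>" and eq: "\<forall>i\<in>{1..n}. cdf_of \<Lambda> (p i) x = cdf_of \<Lambda> (p' i) x"
  shows "cdf_of \<Lambda> (\<psi> p) x = cdf_of \<Lambda> (\<psi> p') x"
proof -
  define h where "h k = (\<lambda>i\<in>{1..n}. if i \<le> k then p' i else p i)" for k
  have h_profile: "h k \<in> profiles n \<Lambda>" for k
    using p p' by (auto simp: h_def profiles_def PiE_iff)
  have "cdf_of \<Lambda> (\<psi> (h k)) x = cdf_of \<Lambda> (\<psi> p) x" for k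
  proof (induction k)
    case 0
    have "h 0 = p" using p by (auto simp: h_def profiles_def PiE_def extensional_def)
    then show ?case by simp
  next
    case (Suc k)
    show ?case
    proof (cases "Suc k \<le> n")
      case True
      then have i: "Suc k \<in> {1..n}" by simp
      have "h (Suc k) = (h k)(Suc k := p' (Suc k))" using True by (auto simp: h_def fun_eq_iff)
      moreover have "p' (Suc k) \<in> prob_measures \<Lambda>" using p' i by (auto simp: profiles_def)
      moreover have "cdf_of \<Lambda> (h k (Suc k)) x = cdf_of \<Lambda> (p' (Suc k)) x" using eq i by (simp add: h_def)
      ultimately show ?thesis
        using level_SP_cdf_of_fun_upd[OF SP h_profile i _ x] Suc.IH by metis
    next
      case False
      then have "h (Suc k) = h k" by (auto simp: h_def fun_eq_iff)
      then show ?thesis using Suc.IH by simp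
    qed
  qed
  moreover have "h n = p'" using p' by (auto simp: h_def profiles_def PiE_def extensional_def fun_eq_iff)
  ultimately show ?thesis by metis
qed

lemma level_SP_cdf_of_squeeze:
  assumes SP: "level_SP n \<Lambda> \<psi>" and p: "p \<in> profiles n \<Lambda>" and i: "i \<in> {1..n}"
    and q: "q \<in> prob_measures \<Lambda>" and q': "q' \<in> prob_measures \<Lambda>" and x: "x \<in> \<Lambda>"
    and below: "cdf_of \<Lambda> (\<psi> (p(i := q))) x \<le> cdf_of \<Lambda> (p i) x"
    and above: "cdf_of \<Lambda> (p i) x \<le> cdf_of \<Lambda> (\<psi> (p(i := q'))) x"
  shows "cdf_of \<Lambda> (\<psi> p) x = cdf_of \<Lambda> (p i) x"
  using level_SPD[OF SP p i q x] level_SPD[OF SP p i q' x] below above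
  by (cases rule: linorder_cases[of "cdf_of \<Lambda> (p i) x" "cdf_of \<Lambda> (\<psi> p) x"]) auto

context
  fixes n :: nat and \<Lambda> :: "real set" and \<psi> :: "(nat \<Rightarrow> real measure) \<Rightarrow> real measure"
  assumes PAF: "is_PAF n \<Lambda> \<psi>" and SP: "level_SP n \<Lambda> \<psi>"
    and UN: "unanimous n \<Lambda> \<psi>" and DIV: "diversity n \<Lambda> \<psi>"
begin

lemma aggregate_cdf_of_less_across_supp:
  assumes "p \<in> profiles n \<Lambda>" "i \<in> {1..n}" "x \<in> supp \<Lambda> (p i)" "y < x" "x < z"
  shows "cdf_of \<Lambda> (\<psi> p) y < cdf_of \<Lambda> (\<psi> p) z"
proof (rule cdf_of_less_across_supp)
  show "\<psi> p \<in> prob_measures \<Lambda>" using PAF assms(1) by (simp add: is_PAF_def)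
  show "x \<in> supp \<Lambda> (\<psi> p)" using DIV assms(1-3) unfolding diversity_def by blast
qed (use assms in auto)

lemma cdf_of_aggregate_Dirac_profile_pos:
  assumes "a \<in> \<Lambda>" "b \<in> \<Lambda>" "a \<noteq> b" "a < y" "1 \<le> n"
  shows "0 < cdf_of \<Lambda> (\<psi> (split_profile n (two_point_measure \<Lambda> 1 a b) (two_point_measure \<Lambda> 1 b a))) y"
proof -
  let ?p = "split_profile n (two_point_measure \<Lambda> 1 a b) (two_point_measure \<Lambda> 1 b a)"
  have "a \<in> supp \<Lambda> (?p 1)"
    using assms by (simp add: split_profile_def in_supp_two_point_measure)
  then have "cdf_of \<Lambda> (\<psi> ?p) (a - 1) < cdf_of \<Lambda> (\<psi> ?p) y"
    using assms by (intro aggregate_cdf_of_less_across_supp split_profile_in_profiles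
        two_point_measure_in_prob_measures) auto
  then show ?thesis using cdf_of_nonneg order_le_less_trans by blast
qed

lemma cdf_of_aggregate_squeezed_by_Diracs:
  fixes a b y :: real
  defines "\<delta>\<^sub>a \<equiv> two_point_measure \<Lambda> 1 a b" and "\<delta>\<^sub>b \<equiv> two_point_measure \<Lambda> 1 b a"
  assumes "a \<in> \<Lambda>" "b \<in> \<Lambda>" "y \<in> \<Lambda>" "a < y" "y < b" "1 \<le> n" and P: "P \<in> prob_measures \<Lambda>"
    and P_y: "cdf_of \<Lambda> P y = cdf_of \<Lambda> (\<psi> (split_profile n \<delta>\<^sub>a \<delta>\<^sub>b)) y"
  shows "cdf_of \<Lambda> (\<psi> (split_profile n P \<delta>\<^sub>b)) y = cdf_of \<Lambda> P y"
proof -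
  have \<delta>: "\<delta>\<^sub>a \<in> prob_measures \<Lambda>" "\<delta>\<^sub>b \<in> prob_measures \<Lambda>"
    using assms by (simp_all add: two_point_measure_in_prob_measures)
  have one: "1 \<in> {1..n}" using \<open>1 \<le> n\<close> by simp
  have P_1: "split_profile n P \<delta>\<^sub>b 1 = P" using one by (simp add: split_profile_def)
  have "(split_profile n P \<delta>\<^sub>b)(1 := \<delta>\<^sub>b) = (\<lambda>i\<in>{1..n}. \<delta>\<^sub>b)"
    using split_profile_fun_upd[OF \<open>1 \<le> n\<close>] split_profile_same by metis
  then have "\<psi> ((split_profile n P \<delta>\<^sub>b)(1 := \<delta>\<^sub>b)) = \<delta>\<^sub>b"
    using UN \<delta> by (simp add: unanimous_def)
  moreover have "cdf_of \<Lambda> \<delta>\<^sub>b y = 0"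
    using assms by (simp add: cdf_of_two_point_measure)
  moreover have "(split_profile n P \<delta>\<^sub>b)(1 := \<delta>\<^sub>a) = split_profile n \<delta>\<^sub>a \<delta>\<^sub>b"
    using \<open>1 \<le> n\<close> by (rule split_profile_fun_upd)
  ultimately have "cdf_of \<Lambda> (\<psi> (split_profile n P \<delta>\<^sub>b)) y = cdf_of \<Lambda> (split_profile n P \<delta>\<^sub>b 1) y"
    using P_y cdf_of_nonneg[of \<Lambda> P y] \<open>1 \<le> n\<close>
    by (intro level_SP_cdf_of_squeeze[OF SP split_profile_in_profiles[OF P \<delta>(2)] one \<delta>(2,1) \<open>y \<in> \<Lambda>\<close>])
      (simp_all add: split_profile_def)
  then show ?thesis unfolding P_1 .
qed

lemma level_SP_unanimous_diverse_absurd: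
  assumes "a \<in> \<Lambda>" "y \<in> \<Lambda>" "c \<in> \<Lambda>" "z \<in> \<Lambda>" "b \<in> \<Lambda>"
    and "a < y" "y < c" "c < z" "z < b" and "2 \<le> n"
  shows False
proof -
  have voter_2: "2 \<in> {1..n}" using \<open>2 \<le> n\<close> by simp
  define \<delta>\<^sub>a where "\<delta>\<^sub>a = two_point_measure \<Lambda> 1 a b"
  define \<delta>\<^sub>b where "\<delta>\<^sub>b = two_point_measure \<Lambda> 1 b a"
  have \<delta>: "\<delta>\<^sub>a \<in> prob_measures \<Lambda>" "\<delta>\<^sub>b \<in> prob_measures \<Lambda>"
    using assms by (simp_all add: \<delta>\<^sub>a_def \<delta>\<^sub>b_def two_point_measure_in_prob_measures)
  have cdf_\<delta>\<^sub>b: "cdf_of \<Lambda> \<delta>\<^sub>b x = (if b \<le> x then 1 else 0)" for x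
    using assms by (simp add: \<delta>\<^sub>b_def cdf_of_two_point_measure)
  define s where "s = cdf_of \<Lambda> (\<psi> (split_profile n \<delta>\<^sub>a \<delta>\<^sub>b)) y"
  have s_pos: "0 < s"
    using cdf_of_aggregate_Dirac_profile_pos assms by (simp add: s_def \<delta>\<^sub>a_def \<delta>\<^sub>b_def)
  have s_le_1: "s \<le> 1"
    using PAF \<delta> by (simp add: s_def is_PAF_def split_profile_in_profiles cdf_of_le_1)
  define P where "P = two_point_measure \<Lambda> s a b"
  define Q where "Q = two_point_measure \<Lambda> s c b"
  have PQ: "P \<in> prob_measures \<Lambda>" "Q \<in> prob_measures \<Lambda>"
    using assms by (simp_all add: P_def Q_def two_point_measure_in_prob_measures)
  have cdf_P: "cdf_of \<Lambda> P x = (if a \<le> x then s else 0) + (if b \<le> x then 1 - s else 0)" for x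
    using assms s_pos s_le_1 by (simp add: P_def cdf_of_two_point_measure)
  have cdf_Q: "cdf_of \<Lambda> Q x = (if c \<le> x then s else 0) + (if b \<le> x then 1 - s else 0)" for x
    using assms s_pos s_le_1 by (simp add: Q_def cdf_of_two_point_measure)
  have "cdf_of \<Lambda> (\<psi> (split_profile n P \<delta>\<^sub>b)) y = s"
    using cdf_of_aggregate_squeezed_by_Diracs[of a b y P] assms PQ(1) s_pos
    by (simp add: cdf_P \<delta>\<^sub>a_def \<delta>\<^sub>b_def s_def)
  moreover have "cdf_of \<Lambda> (\<psi> (split_profile n P \<delta>\<^sub>b)) y = cdf_of \<Lambda> (\<psi> (split_profile n P Q)) y"
    using \<open>y < c\<close> \<open>c < z\<close> \<open>z < b\<close>
    by (intro level_SP_cdf_of_eq[OF SP] split_profile_in_profiles PQ \<delta> \<open>y \<in> \<Lambda>\<close>)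
      (simp add: split_profile_def cdf_Q cdf_\<delta>\<^sub>b)
  ultimately have at_y: "cdf_of \<Lambda> (\<psi> (split_profile n P Q)) y = s" by simp
  have "cdf_of \<Lambda> (\<psi> (split_profile n P Q)) z = cdf_of \<Lambda> (\<psi> (\<lambda>i\<in>{1..n}. P)) z"
    using \<open>a < y\<close> \<open>y < c\<close> \<open>c < z\<close> \<open>z < b\<close>
    by (intro level_SP_cdf_of_eq[OF SP] split_profile_in_profiles constant_profile_in_profiles PQ \<open>z \<in> \<Lambda>\<close>)
      (simp add: split_profile_def cdf_P cdf_Q)
  also have "\<dots> = s"
    using UN PQ(1) \<open>a < y\<close> \<open>y < c\<close> \<open>c < z\<close> \<open>z < b\<close> by (simp add: unanimous_def cdf_P)
  finally have at_z: "cdf_of \<Lambda> (\<psi> (split_profile n P Q)) z = s" .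
  have "c \<in> supp \<Lambda> (split_profile n P Q 2)"
    using voter_2 assms s_pos s_le_1 by (simp add: split_profile_def Q_def in_supp_two_point_measure)
  with voter_2 have "cdf_of \<Lambda> (\<psi> (split_profile n P Q)) y < cdf_of \<Lambda> (\<psi> (split_profile n P Q)) z"
    using \<open>y < c\<close> \<open>c < z\<close> by (intro aggregate_cdf_of_less_across_supp split_profile_in_profiles PQ)
  with at_y at_z show False by simp
qed

end

theorem mainTheorem15:
  fixes \<Lambda> :: "real set" and n :: nat
  assumes "is_interval \<Lambda>" and "\<exists>a\<in>\<Lambda>. \<exists>b\<in>\<Lambda>. a < b" and "n \<ge> 2"
  shows "\<not> (\<exists>\<psi>. is_PAF n \<Lambda> \<psi> \<and> level_SP n \<Lambda> \<psi> \<and> unanimous n \<Lambda> \<psi> \<and> diversity n \<Lambda> \<psi>)"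
proof
  assume "\<exists>\<psi>. is_PAF n \<Lambda> \<psi> \<and> level_SP n \<Lambda> \<psi> \<and> unanimous n \<Lambda> \<psi> \<and> diversity n \<Lambda> \<psi>"
  then obtain \<psi> where \<psi>: "is_PAF n \<Lambda> \<psi>" "level_SP n \<Lambda> \<psi>" "unanimous n \<Lambda> \<psi>" "diversity n \<Lambda> \<psi>"
    by blast
  obtain a b where ab: "a \<in> \<Lambda>" "b \<in> \<Lambda>" "a < b" using assms(2) by blast
  have "{a..b} \<subseteq> \<Lambda>"
    using \<open>is_interval \<Lambda>\<close> ab unfolding is_interval_1 atLeastAtMost_iff subset_iff by blast
  define d where "d = (b - a) / 4"
  have d: "0 < d" "a + 4 * d = b" using ab by (simp_all add: d_def field_simps)
  have "a + d \<in> {a..b}" "a + 2 * d \<in> {a..b}" "a + 3 * d \<in> {a..b}" using d by auto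
  with \<open>{a..b} \<subseteq> \<Lambda>\<close> have "a + d \<in> \<Lambda>" "a + 2 * d \<in> \<Lambda>" "a + 3 * d \<in> \<Lambda>" by blast+
  from level_SP_unanimous_diverse_absurd[OF \<psi> ab(1) this ab(2)] d \<open>n \<ge> 2\<close> show False by simp
qed

end
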